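(* Let $\mathcal H$ be a complex separable Hilbert space and let $T \in \mathcal B(\mathcal H)$ with polar decomposition $T = V|T|$. Then $$\|T - V\| = \min\{\|T - X\| : X \in \mathcal I,\ j(V^*V, X^*X) \le 0\} = \min\{\|T - X\| : X \in \mathcal I,\ j(VV^*, XX^* ) \le 0\}.$$ (In particular both minima exist and are attained at $X = V$.)
   Context: $\mathcal B(\mathcal H)$ is the algebra of bounded linear operators on $\mathcal H$, and $\|\cdot\|$ is the operator norm. $\mathcal I$ denotes the set of all partial isometries on $\mathcal H$, i.e. $X \in \mathcal B(\mathcal H)$ with $XX^*X = X$; for such $X$, $X^*X$ is the orthogonal projection onto $\ker(X)^\perp$ and $XX^*$ the orthogonal projection onto $\operatorname{ran}(X)$. $|T| = (T^*T)^{1/2}$. The polar factor of $T$ is the unique $V \in \mathcal I$ with $T = V|T|$ and $\ker V = \ker T$. For orthogonal projections $P, Q$ on $\mathcal H$, define $j(P,Q) := \dim(\operatorname{ran}(P) \cap \ker(Q)) - \dim(\ker(P) \cap \operatorname{ran}(Q)) \in [-\infty, \infty]$ if at least one of these dimensions is finite, and $j(P,Q) := 0$ if both are infinite. *)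

theory Defs
  imports "HOL-Analysis.Analysis" "HOL-Library.Extended_Real"
begin

text \<open>A complex Hilbert space, presented through its realification: a real Hilbert
space (real part of the complex inner product) together with the real-linear map
imult = multiplication by the imaginary unit i.\<close>

class complex_hilbert = real_inner + complete_space +
  fixes imult :: "'a \<Rightarrow> 'a"
  assumes imult_add: "imult (x + y) = imult x + imult y"
    and imult_scaleR: "imult (r *\<^sub>R x) = r *\<^sub>R imult x"
    and imult_imult: "imult (imult x) = - x"
    and inner_imult: "inner (imult x) (imult y) = inner x y"


text \<open>Complex scalar multiplication and the complex inner product
(linear in the first argument, conjugate-linear in the second).\<close>
definition scaleC :: "complex \<Rightarrow> 'a::complex_hilbert \<Rightarrow> 'a" where
  "scaleC c x = Re c *\<^sub>R x + Im c *\<^sub>R imult x"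

definition cinner :: "'a::complex_hilbert \<Rightarrow> 'a \<Rightarrow> complex" where
  "cinner x y = Complex (inner x y) (- inner (imult x) y)"

definition cspan :: "'a::complex_hilbert set \<Rightarrow> 'a set" where
  "cspan B = span (B \<union> imult ` B)"

definition cdim :: "'a::complex_hilbert set \<Rightarrow> enat" where
  "cdim S = (if \<exists>B. finite B \<and> B \<subseteq> S \<and> cspan B = S
             then enat (LEAST n. \<exists>B. finite B \<and> card B = n \<and> B \<subseteq> S \<and> cspan B = S)
             else \<infinity>)"

definition bounded_clinear_op :: "('a::complex_hilbert \<Rightarrow> 'a) \<Rightarrow> bool" where
  "bounded_clinear_op T \<longleftrightarrow> bounded_linear T \<and> (\<forall>x. T (imult x) = imult (T x))"

definition cadj :: "('a::complex_hilbert \<Rightarrow> 'a) \<Rightarrow> ('a \<Rightarrow> 'a)" where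
  "cadj T = (THE S. \<forall>x y. cinner (T x) y = cinner x (S y))"

definition op_abs :: "('a::complex_hilbert \<Rightarrow> 'a) \<Rightarrow> ('a \<Rightarrow> 'a)" where
  "op_abs T = (THE A. bounded_clinear_op A \<and> (\<forall>x. Im (cinner (A x) x) = 0 \<and> 0 \<le> Re (cinner (A x) x))
                 \<and> (\<forall>x. A (A x) = cadj T (T x)))"

definition ker_op :: "('a::complex_hilbert \<Rightarrow> 'a) \<Rightarrow> 'a set" where
  "ker_op T = {x. T x = 0}"

definition partial_isometries :: "('a::complex_hilbert \<Rightarrow> 'a) set" where
  "partial_isometries = {X. bounded_clinear_op X \<and> (\<forall>x. X (cadj X (X x)) = X x)}"

definition jidx :: "('a::complex_hilbert \<Rightarrow> 'a) \<Rightarrow> ('a \<Rightarrow> 'a) \<Rightarrow> ereal" where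
  "jidx P Q = (let a = cdim (range P \<inter> ker_op Q); b = cdim (ker_op P \<inter> range Q) in
      if a = \<infinity> \<and> b = \<infinity> then 0 else ereal_of_enat a - ereal_of_enat b)"

end

theory Submission
  imports Defs "HOL-Computational_Algebra.Formal_Power_Series"
begin

(* Write A = |T| and P = V*V, so that T - V = V (A - P).  Suppose a partial isometry X with
   j(P, X*X) <= 0 satisfies s = ||T - X|| < ||T - V||.  Then the selfadjoint operator A - P has
   a vector in ran P on which its form exceeds s in absolute value, so either T stretches some
   vector by more than 1 + s, impossible since ||X|| <= 1, or some unit vector v in ran P has
   ||T v|| + s < 1.  In the latter case ker P meets ran X*X trivially, because T vanishes on
   ker P while X is isometric on ran X*X and s < 1; the index condition then makes ran P meet
   ker X*X trivially, so P (ran X*X) is dense in ran P.  For q in ran X*X with P q close to v,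
   the vector w = v + (q - P q) has T w = T v, norm at least 1, and is close to q; hence
   ||X w|| is close to ||w||, against ||X w|| <= ||T v|| + s ||w||.  The index condition on the
   final projections is handled by the same argument for T* = A V* and X*.  The modulus |T| is
   the unique positive square root of T*T, built from the binomial series of sqrt(1 - t). *)

lemma linear_imult: "linear (imult :: 'a::complex_hilbert \<Rightarrow> 'a)"
  by (rule linearI) (simp_all add: imult_add imult_scaleR)

lemma bounded_linear_imult: "bounded_linear (imult :: 'a::complex_hilbert \<Rightarrow> 'a)"
proof -
  interpret linear imult by (rule linear_imult)
  show ?thesis by unfold_locales (rule exI[of _ 1], simp add: norm_eq_sqrt_inner inner_imult)
qed

lemma inner_imult_left: "inner (imult x) y = - inner x (imult (y::'a::complex_hilbert))"
proof -
  have "inner (imult x) y = inner (imult (imult x)) (imult y)" by (simp add: inner_imult)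
  also have "\<dots> = - inner x (imult y)" by (simp add: imult_imult)
  finally show ?thesis .
qed

subclass (in complex_hilbert) banach ..

lemma nonneg_quadratic_discriminant:
  fixes a b c :: real
  assumes q: "\<And>t. 0 \<le> a + 2 * t * b + t^2 * c" and c: "0 \<le> c"
  shows "b^2 \<le> a * c"
proof (cases "c = 0")
  case True
  show ?thesis
  proof (cases "b = 0")
    case False
    have "0 \<le> a + 2 * (- (a + 1) / (2 * b)) * b" using q[of "- (a + 1) / (2 * b)"] True by simp
    then show ?thesis using False by (simp add: field_simps)
  qed (use True q[of 0] in simp)
next
  case False
  then have c0: "c > 0" using c by simp
  have "0 \<le> a + 2 * (- b / c) * b + (- b / c)^2 * c" by (rule q)
  also have "\<dots> = a - b^2 / c" using c0 by (simp add: field_simps power2_eq_square)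
  finally show ?thesis using c0 by (simp add: field_simps)
qed

section \<open>Orthogonal projection, Riesz representation and adjoints\<close>

lemma parallelogram_midpoint:
  fixes x a b :: "'a::real_inner"
  shows "norm (a - b)^2 = 2 * norm (x - a)^2 + 2 * norm (x - b)^2 - 4 * norm (x - (1/2) *\<^sub>R (a + b))^2"
  unfolding power2_norm_eq_inner by (simp add: algebra_simps inner_commute)

lemma Cauchy_if_norm_sq_le:
  fixes f :: "nat \<Rightarrow> 'a::real_normed_vector"
  assumes "\<And>n k. norm (f n - f k)^2 \<le> 2 / real (Suc n) + 2 / real (Suc k)"
  shows "Cauchy f"
proof (rule metric_CauchyI)
  fix e :: real assume e: "0 < e"
  obtain N where N: "4 / e^2 < real N" using reals_Archimedean2 by blast
  have small: "4 / real (Suc N) < e^2"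
    using N e by (simp add: field_simps) (smt (verit) zero_less_power)
  have mono: "2 / real (Suc n) \<le> 2 / real (Suc N)" if "N \<le> n" for n
    using that by (auto intro!: divide_left_mono)
  have "norm (f m - f n)^2 < e^2" if "N \<le> m" "N \<le> n" for m n
    using assms[of m n] mono[OF that(1)] mono[OF that(2)] small by linarith
  then show "\<exists>M. \<forall>m\<ge>M. \<forall>n\<ge>M. dist (f m) (f n) < e"
    using e by (metis dist_norm norm_ge_zero power_less_imp_less_base less_imp_le)
qed

text \<open>A minimising sequence is Cauchy by the parallelogram law, since midpoints stay in M.\<close>

lemma closed_subspace_nearest_point:
  fixes M :: "'a::{real_inner,complete_space} set"
  assumes sub: "subspace M" and cl: "closed M"
  shows "\<exists>m\<in>M. \<forall>y\<in>M. norm (x - m) \<le> norm (x - y)"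
proof -
  define d where "d = Inf ((\<lambda>m. norm (x - m)) ` M)"
  have M0: "0 \<in> M" using sub by (simp add: subspace_0)
  have bdd: "bdd_below ((\<lambda>m. norm (x - m)) ` M)" by (rule bdd_belowI[of _ 0]) auto
  have dle: "d \<le> norm (x - m)" if "m \<in> M" for m
    unfolding d_def using bdd that by (auto intro: cInf_lower)
  have d0: "0 \<le> d" unfolding d_def using M0 by (intro cInf_greatest) auto
  have "\<exists>m\<in>M. norm (x - m)^2 < d^2 + 1 / real (Suc n)" for n
  proof -
    have "d < sqrt (d^2 + 1 / real (Suc n))"
      using d0 by (simp add: real_less_rsqrt)
    then obtain m where "m \<in> M" "norm (x - m) < sqrt (d^2 + 1 / real (Suc n))"
      unfolding d_def using M0 by (subst (asm) cInf_less_iff[OF _ bdd]) auto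
    moreover from this(2) have "norm (x - m)^2 < (sqrt (d^2 + 1 / real (Suc n)))^2"
      by (intro power_strict_mono) auto
    ultimately show ?thesis by auto
  qed
  then obtain f where fM: "\<And>n. f n \<in> M"
    and fd: "\<And>n. norm (x - f n)^2 < d^2 + 1 / real (Suc n)"
    by metis
  have "norm (f n - f k)^2 \<le> 2 / real (Suc n) + 2 / real (Suc k)" for n k
  proof -
    have "(1/2) *\<^sub>R (f n + f k) \<in> M"
      using sub fM by (simp add: subspace_add subspace_scale)
    then have "d^2 \<le> norm (x - (1/2) *\<^sub>R (f n + f k))^2"
      using dle d0 by (simp add: power_mono)
    then show ?thesis using fd[of n] fd[of k] parallelogram_midpoint[of "f n" "f k" x] by linarith
  qed
  then obtain m where lim: "f \<longlonglongrightarrow> m"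
    using Cauchy_if_norm_sq_le convergent_eq_Cauchy by blast
  have "m \<in> M" using cl fM lim by (metis closed_sequentially)
  have "(\<lambda>n. norm (x - f n)^2) \<longlonglongrightarrow> norm (x - m)^2"
    by (intro tendsto_intros lim)
  moreover have "(\<lambda>n. d^2 + 1 / real (Suc n)) \<longlonglongrightarrow> d^2 + 0"
    by (intro tendsto_intros LIMSEQ_inverse_real_of_nat[unfolded inverse_eq_divide])
  ultimately have "norm (x - m)^2 \<le> d^2"
    using fd by (intro LIMSEQ_le) (auto intro: less_imp_le)
  then have "norm (x - m) \<le> d"
    by (rule power2_le_imp_le[OF _ d0])
  then show ?thesis using \<open>m \<in> M\<close> dle by (meson order_trans)
qed

lemma orthogonal_projection_exists:
  fixes M :: "'a::{real_inner,complete_space} set"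
  assumes "subspace M" and "closed M"
  shows "\<exists>m\<in>M. \<forall>y\<in>M. inner (x - m) y = 0"
proof -
  obtain m where "m \<in> M" and m_min: "\<And>y. y \<in> M \<Longrightarrow> norm (x - m) \<le> norm (x - y)"
    using closed_subspace_nearest_point[OF assms] by blast
  show ?thesis
  proof (intro bexI[OF _ \<open>m \<in> M\<close>] ballI)
    fix y assume "y \<in> M"
    let ?a = "inner (x - m) y"
    have "norm (x - m)^2 \<le> norm (x - (m + t *\<^sub>R y))^2" for t
      using m_min[of "m + t *\<^sub>R y"] \<open>m \<in> M\<close> \<open>y \<in> M\<close> assms(1)
      by (simp add: subspace_add subspace_scale power_mono)
    then have "0 \<le> 0 + 2 * t * (- ?a) + t^2 * inner y y" for t
      unfolding power2_norm_eq_inner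
      by (simp add: algebra_simps inner_commute power2_eq_square)
    from nonneg_quadratic_discriminant[OF this] show "?a = 0" by simp
  qed
qed

lemma inner_right_ext: "(\<And>x. inner x u = inner x (v::'a::real_inner)) \<Longrightarrow> u = v"
  by (metis inner_diff_right inner_eq_zero_iff right_minus_eq)

lemma riesz_representation:
  fixes f :: "'a::{real_inner,complete_space} \<Rightarrow> real"
  assumes f: "bounded_linear f"
  shows "\<exists>z. \<forall>x. f x = inner x z"
proof (cases "\<forall>x. f x = 0")
  case True then show ?thesis by (intro exI[of _ 0]) simp
next
  case False
  then obtain x0 where x0: "f x0 \<noteq> 0" by blast
  interpret bounded_linear f by fact
  let ?M = "{x. f x = 0}"
  have "subspace ?M" by (auto simp: subspace_def add scale)
  moreover have "closed ?M" by (intro closed_Collect_eq continuous_on continuous_on_id continuous_on_const)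
  ultimately obtain m where m: "f m = 0" "\<forall>y\<in>?M. inner (x0 - m) y = 0"
    using orthogonal_projection_exists[of ?M x0] by auto
  define w where "w = x0 - m"
  have fw: "f w \<noteq> 0" using x0 m by (simp add: w_def diff)
  have w0: "inner w w \<noteq> 0" using fw by (auto simp: zero)
  have "inner x w = f x / f w * inner w w" for x
  proof -
    have "x - (f x / f w) *\<^sub>R w \<in> ?M" using fw by (simp add: diff scale)
    then have "inner (x - (f x / f w) *\<^sub>R w) w = 0" using m(2) by (auto simp: w_def inner_commute)
    then show ?thesis by (simp add: inner_diff_left)
  qed
  then show ?thesis using fw w0
    by (intro exI[of _ "(f w / inner w w) *\<^sub>R w"]) (simp add: field_simps)
qed

definition real_adjoint :: "('a::{real_inner,complete_space} \<Rightarrow> 'a) \<Rightarrow> 'a \<Rightarrow> 'a" where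
  "real_adjoint T y = (SOME z. \<forall>x. inner (T x) y = inner x z)"

lemma inner_real_adjoint:
  assumes "bounded_linear T"
  shows "inner (T x) y = inner x (real_adjoint T y)"
proof -
  have "bounded_linear (\<lambda>x. inner (T x) y)"
    using bounded_linear_compose[OF bounded_linear_inner_left assms] .
  then obtain z where "\<forall>x. inner (T x) y = inner x z" using riesz_representation by blast
  then have "\<forall>x. inner (T x) y = inner x (real_adjoint T y)" unfolding real_adjoint_def by (rule someI)
  then show ?thesis by blast
qed

lemma bounded_linear_real_adjoint:
  assumes T: "bounded_linear T"
  shows "bounded_linear (real_adjoint T)"
proof -
  have add: "real_adjoint T (a + b) = real_adjoint T a + real_adjoint T b" for a b
    by (rule inner_right_ext) (simp add: inner_real_adjoint[OF T, symmetric] inner_add_right)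
  have scale: "real_adjoint T (r *\<^sub>R a) = r *\<^sub>R real_adjoint T a" for r a
    by (rule inner_right_ext) (simp add: inner_real_adjoint[OF T, symmetric])
  obtain K where K: "\<And>x. norm (T x) \<le> norm x * K" "K \<ge> 0"
    using bounded_linear.nonneg_bounded[OF T] by blast
  have "norm (real_adjoint T y) \<le> norm y * K" for y
  proof (cases "real_adjoint T y = 0")
    case True then show ?thesis using K by simp
  next
    case False
    have "norm (real_adjoint T y)^2 = inner (T (real_adjoint T y)) y"
      by (simp add: inner_real_adjoint[OF T] power2_norm_eq_inner)
    also have "\<dots> \<le> norm (T (real_adjoint T y)) * norm y" by (rule norm_cauchy_schwarz)
    also have "\<dots> \<le> norm (real_adjoint T y) * K * norm y" using K by (simp add: mult_right_mono)
    finally show ?thesis using False by (simp add: power2_eq_square mult_ac)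
  qed
  then show ?thesis by (intro bounded_linear_intro[OF add scale])
qed

lemma real_adjoint_unique:
  assumes "bounded_linear T" and "\<And>x y. inner (T x) y = inner x (S y)"
  shows "S = real_adjoint T"
  by (rule ext, rule inner_right_ext) (metis assms inner_real_adjoint)

lemma bounded_clinear_op_linear: "bounded_clinear_op T \<Longrightarrow> bounded_linear T"
  and bounded_clinear_op_imult: "bounded_clinear_op T \<Longrightarrow> T (imult x) = imult (T x)"
  by (auto simp: bounded_clinear_op_def)

lemma bounded_clinear_op_compose:
  "bounded_clinear_op S \<Longrightarrow> bounded_clinear_op T \<Longrightarrow> bounded_clinear_op (\<lambda>x. S (T x))"
  unfolding bounded_clinear_op_def by (auto intro: bounded_linear_compose)

lemma bounded_clinear_op_ident: "bounded_clinear_op (\<lambda>x::'a::complex_hilbert. x)"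
  by (simp add: bounded_clinear_op_def bounded_linear_ident)

lemma real_adjoint_imult:
  assumes T: "bounded_clinear_op T"
  shows "real_adjoint T (imult y) = imult (real_adjoint T y)"
proof (rule inner_right_ext)
  fix x
  have T': "bounded_linear T" using T by (rule bounded_clinear_op_linear)
  have "inner x (real_adjoint T (imult y)) = inner (T x) (imult y)"
    by (simp add: inner_real_adjoint[OF T'])
  also have "\<dots> = - inner (T (imult x)) y"
    by (simp add: inner_imult_left bounded_clinear_op_imult[OF T])
  also have "\<dots> = inner x (imult (real_adjoint T y))"
    by (simp add: inner_real_adjoint[OF T'] inner_imult_left)
  finally show "inner x (real_adjoint T (imult y)) = inner x (imult (real_adjoint T y))" .
qed

text \<open>For complex-linear operators the complex adjoint agrees with the adjoint of the realification,
  since the imaginary part of the complex inner product is a real inner product with imult.\<close>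

lemma cadj_eq_real_adjoint:
  assumes T: "bounded_clinear_op T"
  shows "cadj T = real_adjoint T"
proof -
  have T': "bounded_linear T" using T by (rule bounded_clinear_op_linear)
  have "\<forall>x y. cinner (T x) y = cinner x (real_adjoint T y)"
    by (simp add: cinner_def inner_real_adjoint[OF T'] bounded_clinear_op_imult[OF T, symmetric])
  moreover have "S = real_adjoint T" if "\<forall>x y. cinner (T x) y = cinner x (S y)" for S
    using that by (intro real_adjoint_unique[OF T']) (simp add: cinner_def)
  ultimately show ?thesis unfolding cadj_def by (rule the_equality)
qed

lemma bounded_clinear_op_cadj:
  assumes "bounded_clinear_op T"
  shows "bounded_clinear_op (cadj T)"
  using bounded_linear_real_adjoint[OF bounded_clinear_op_linear[OF assms]] real_adjoint_imult[OF assms]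
  by (simp add: cadj_eq_real_adjoint[OF assms] bounded_clinear_op_def)

lemma inner_cadj:
  assumes "bounded_clinear_op T"
  shows "inner (T x) y = inner x (cadj T y)"
  using assms by (simp add: cadj_eq_real_adjoint inner_real_adjoint bounded_clinear_op_linear)

lemma inner_cadj_left:
  assumes "bounded_clinear_op T"
  shows "inner (cadj T x) y = inner x (T y)"
  using inner_cadj[OF assms, of y x] by (simp only: inner_commute)

lemma cadj_unique:
  assumes "bounded_clinear_op T" and "\<And>x y. inner (T x) y = inner x (S y)"
  shows "cadj T = S"
  using assms real_adjoint_unique[OF bounded_clinear_op_linear] cadj_eq_real_adjoint by metis

lemma norm_cadj_diff_le:
  assumes T: "bounded_clinear_op T" and X: "bounded_clinear_op X"
    and near: "\<And>x. norm (T x - X x) \<le> s * norm x"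
  shows "norm (cadj T x - cadj X x) \<le> s * norm x"
proof -
  define e where "e = cadj T x - cadj X x"
  have "norm e ^ 2 = inner x (T e - X e)"
    by (simp add: e_def power2_norm_eq_inner inner_diff_left inner_diff_right
        inner_cadj_left[OF T] inner_cadj_left[OF X] linear_diff[OF bounded_linear.linear[OF bounded_clinear_op_linear[OF T]]]
        linear_diff[OF bounded_linear.linear[OF bounded_clinear_op_linear[OF X]]])
  also have "\<dots> \<le> norm x * (s * norm e)"
    using norm_cauchy_schwarz[of x "T e - X e"] mult_left_mono[OF near[of e] norm_ge_zero[of x]]
    by linarith
  finally have "norm e * norm e \<le> (s * norm x) * norm e" by (simp add: power2_eq_square mult_ac)
  moreover have "0 \<le> s * norm x"
    using near[of x] norm_ge_zero[of "T x - X x"] by linarith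
  ultimately show ?thesis unfolding e_def[symmetric]
    by (cases "e = 0") (auto intro: mult_right_le_imp_le)
qed

lemma norm_diff_le_onorm:
  assumes "bounded_clinear_op T" "bounded_clinear_op X"
  shows "norm (T x - X x) \<le> onorm (\<lambda>x. T x - X x) * norm x"
  using assms by (intro onorm bounded_linear_sub bounded_clinear_op_linear)

section \<open>Selfadjoint and positive operators\<close>

definition selfadjoint_op :: "('a::real_inner \<Rightarrow> 'a) \<Rightarrow> bool" where
  "selfadjoint_op D \<longleftrightarrow> (\<forall>x y. inner (D x) y = inner x (D y))"

definition positive_op :: "('a::real_inner \<Rightarrow> 'a) \<Rightarrow> bool" where
  "positive_op D \<longleftrightarrow> (\<forall>x. 0 \<le> inner (D x) x)"

lemma selfadjoint_op_norm_le:
  fixes D :: "'a::real_inner \<Rightarrow> 'a"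
  assumes D: "bounded_linear D" and S: "selfadjoint_op D"
    and m: "\<And>u. \<bar>inner (D u) u\<bar> \<le> m * norm u ^ 2"
  shows "norm (D x) \<le> m * norm x"
proof -
  interpret bounded_linear D by fact
  have polarization: "4 * inner (D x) y \<le> 2 * m * (norm x ^ 2 + norm y ^ 2)" for x y
  proof -
    have "4 * inner (D x) y = inner (D (x + y)) (x + y) - inner (D (x - y)) (x - y)"
      using S unfolding selfadjoint_op_def
      by (simp add: add diff inner_add_left inner_add_right inner_diff_left inner_diff_right inner_commute)
    also have "\<dots> \<le> m * norm (x + y) ^ 2 + m * norm (x - y) ^ 2"
      using m[of "x + y"] m[of "x - y"] by (simp add: abs_le_iff)
    also have "\<dots> = 2 * m * (norm x ^ 2 + norm y ^ 2)"
      unfolding power2_norm_eq_inner by (simp add: algebra_simps inner_commute)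
    finally show ?thesis .
  qed
  show ?thesis
  proof (cases "D x = 0")
    case True
    have "0 \<le> m * norm x ^ 2" using m[of x] by (auto intro: order_trans)
    then have "x \<noteq> 0 \<Longrightarrow> 0 \<le> m" by (simp add: zero_le_mult_iff)
    with True show ?thesis by (cases "x = 0") auto
  next
    case False
    define y where "y = (norm x / norm (D x)) *\<^sub>R D x"
    have "norm y = norm x" using False by (simp add: y_def)
    moreover have "inner (D x) y = norm x * norm (D x)"
      using False by (simp add: y_def power2_norm_eq_inner[symmetric] power2_eq_square)
    ultimately have "norm x * norm (D x) \<le> norm x * (m * norm x)"
      using polarization[of x y] by (simp add: power2_eq_square algebra_simps)
    moreover have "x \<noteq> 0" using False zero by auto
    ultimately show ?thesis by simp
  qed
qed

text \<open>Cauchy-Schwarz for the semi-inner product of a positive operator, applied to x and D x.\<close>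

lemma positive_op_norm_sq_le:
  fixes D :: "'a::real_inner \<Rightarrow> 'a"
  assumes D: "bounded_linear D" and S: "selfadjoint_op D" and P: "positive_op D"
    and K: "\<And>u. norm (D u) \<le> K * norm u"
  shows "norm (D x) ^ 2 \<le> K * inner (D x) x"
proof -
  interpret bounded_linear D by fact
  let ?z = "D x"
  have q: "0 \<le> inner (D x) x + 2 * t * inner (D x) ?z + t^2 * inner (D ?z) ?z" for t
  proof -
    have "0 \<le> inner (D (x + t *\<^sub>R ?z)) (x + t *\<^sub>R ?z)" using P by (simp add: positive_op_def)
    also have "\<dots> = inner (D x) x + 2 * t * inner (D x) ?z + t^2 * inner (D ?z) ?z"
      using S unfolding selfadjoint_op_def
      by (simp add: add scale power2_eq_square algebra_simps)
    finally show ?thesis .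
  qed
  have "inner (D ?z) ?z \<le> norm (D ?z) * norm ?z" by (rule norm_cauchy_schwarz)
  also have "\<dots> \<le> K * norm ?z * norm ?z" using K[of ?z] by (simp add: mult_right_mono)
  finally have "inner (D ?z) ?z \<le> K * norm (D x) ^ 2" by (simp add: power2_eq_square)
  then have "(norm (D x) ^ 2) ^ 2 \<le> inner (D x) x * (K * norm (D x) ^ 2)"
    using nonneg_quadratic_discriminant[OF q] P
    by (simp add: power2_norm_eq_inner positive_op_def order_trans mult_left_mono)
  then have h: "norm (D x) ^ 2 * norm (D x) ^ 2 \<le> (K * inner (D x) x) * norm (D x) ^ 2"
    by (simp add: power2_eq_square algebra_simps)
  show ?thesis
  proof (cases "D x = 0")
    case True
    then show ?thesis using K[of x] P by (simp add: positive_op_def)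
  next
    case False
    then have "0 < norm (D x) ^ 2" by simp
    then show ?thesis using h by (rule mult_right_le_imp_le[rotated])
  qed
qed

lemma positive_op_form_eq_0:
  assumes D: "bounded_linear D" and "selfadjoint_op D" "positive_op D" and "inner (D y) y = 0"
  shows "D y = 0"
proof -
  obtain K where "\<And>x. norm (D x) \<le> norm x * K" using bounded_linear.bounded[OF D] by blast
  then have "norm (D y) ^ 2 \<le> K * inner (D y) y"
    using positive_op_norm_sq_le[OF assms(1-3)] by (metis mult.commute)
  then show ?thesis using assms(4) by simp
qed

lemma selfadjoint_op_if_imult_form_0:
  assumes A: "bounded_clinear_op A" and im: "\<And>x. inner (imult (A x)) x = 0"
  shows "selfadjoint_op (A :: 'a::complex_hilbert \<Rightarrow> 'a)"
  unfolding selfadjoint_op_def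
proof (intro allI)
  fix x y
  interpret bounded_linear A using A by (rule bounded_clinear_op_linear)
  interpret I: linear imult by (rule linear_imult)
  have anti: "inner (imult (A u)) v = - inner (imult (A v)) u" for u v
    using im[of "u + v"] im[of u] im[of v] by (simp add: add I.add inner_add_left inner_add_right)
  have "inner (A x) y = inner (imult (A x)) (imult y)" by (simp add: inner_imult)
  also have "\<dots> = inner (A y) x" by (simp add: anti bounded_clinear_op_imult[OF A] imult_imult)
  finally show "inner (A x) y = inner x (A y)" by (simp add: inner_commute)
qed

section \<open>The binomial series of the square root\<close>

text \<open>Taylor coefficients of sqrt(1 - t).\<close>

definition sqrt_coeff :: "nat \<Rightarrow> real" where
  "sqrt_coeff k = ((1/2) gchoose k) * (-1)^k"

lemma sqrt_coeff_0 [simp]: "sqrt_coeff 0 = 1"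
  by (simp add: sqrt_coeff_def)

lemma sqrt_coeff_Suc: "real (Suc k) * sqrt_coeff (Suc k) = (real k - 1/2) * sqrt_coeff k"
proof -
  have h: "real (Suc k) * ((1/2) gchoose (Suc k)) = (1/2 - real k) * ((1/2::real) gchoose k)"
    using gbinomial_mult_1[of "1/2::real" k] by (simp add: algebra_simps)
  have "real (Suc k) * sqrt_coeff (Suc k) = - ((-1)^k * (real (Suc k) * ((1/2) gchoose (Suc k))))"
    by (simp add: sqrt_coeff_def)
  also have "\<dots> = (real k - 1/2) * sqrt_coeff k"
    by (simp only: h) (simp add: sqrt_coeff_def algebra_simps)
  finally show ?thesis .
qed

lemma sqrt_coeff_nonpos: "k \<ge> 1 \<Longrightarrow> sqrt_coeff k \<le> 0"
proof (induction k rule: dec_induct)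
  case base
  then show ?case by (simp add: sqrt_coeff_def)
next
  case (step n)
  have "real (Suc n) * sqrt_coeff (Suc n) \<le> 0"
    unfolding sqrt_coeff_Suc using step by (intro mult_nonneg_nonpos) auto
  then show ?case by (simp add: mult_le_0_iff)
qed

lemma sum_sqrt_coeff: "(\<Sum>k\<le>n. sqrt_coeff k) = (1 - 2 * real n) * sqrt_coeff n"
proof (induction n)
  case (Suc n)
  have "(1 - 2 * real n) * sqrt_coeff n = - 2 * (real (Suc n) * sqrt_coeff (Suc n))"
    unfolding sqrt_coeff_Suc by (simp add: algebra_simps)
  with Suc show ?case by (simp add: algebra_simps)
qed simp

lemma sum_sqrt_coeff_nonneg: "0 \<le> (\<Sum>k\<le>n. sqrt_coeff k)"
  unfolding sum_sqrt_coeff using sqrt_coeff_nonpos[of n]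
  by (cases "n = 0") (auto intro: mult_nonpos_nonpos)

lemma sum_abs_sqrt_coeff: "(\<Sum>k<Suc n. \<bar>sqrt_coeff k\<bar>) = 2 - (\<Sum>k\<le>n. sqrt_coeff k)"
proof (induction n)
  case (Suc n)
  have "\<bar>sqrt_coeff (Suc n)\<bar> = - sqrt_coeff (Suc n)" using sqrt_coeff_nonpos[of "Suc n"] by simp
  with Suc show ?case by simp
qed simp

lemma summable_abs_sqrt_coeff: "summable (\<lambda>k. \<bar>sqrt_coeff k\<bar>)"
proof (rule summableI_nonneg_bounded[of _ 2])
  show "(\<Sum>k<n. \<bar>sqrt_coeff k\<bar>) \<le> 2" for n
    using sum_abs_sqrt_coeff[of "n - 1"] sum_sqrt_coeff_nonneg[of "n - 1"] by (cases n) auto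
qed simp

text \<open>The series squares to 1 - t, by Vandermonde's identity for 1/2 + 1/2 = 1.\<close>

lemma sqrt_coeff_convolution:
  "(\<Sum>i\<le>n. sqrt_coeff i * sqrt_coeff (n - i)) = (if n = 0 then 1 else if n = 1 then -1 else 0)"
proof -
  have "(\<Sum>i\<le>n. sqrt_coeff i * sqrt_coeff (n - i))
      = (\<Sum>i\<le>n. ((1/2::real) gchoose i) * ((1/2) gchoose (n - i))) * (-1)^n"
    unfolding sum_distrib_right
  proof (rule sum.cong)
    fix i assume "i \<in> {..n}"
    then have "(-1::real)^i * (-1)^(n-i) = (-1)^n" by (metis atMost_iff le_add_diff_inverse power_add)
    then show "sqrt_coeff i * sqrt_coeff (n - i) = ((1/2::real) gchoose i) * ((1/2) gchoose (n - i)) * (-1)^n"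
      unfolding sqrt_coeff_def by (metis (no_types, lifting) mult.assoc mult.left_commute)
  qed simp
  also have "(\<Sum>i\<le>n. ((1/2::real) gchoose i) * ((1/2) gchoose (n - i))) = (1::real) gchoose n"
    using gbinomial_Vandermonde[of "1/2::real" "1/2" n] by (simp add: atLeast0AtMost)
  also have "\<dots> = real (1 choose n)"
    using binomial_gbinomial[of 1 n, where 'a=real] by simp
  also have "real (1 choose n) * (-1)^n = (if n = 0 then 1 else if n = 1 then -1 else 0)"
  proof (cases "n < 2")
    case True
    then consider "n = 0" | "n = 1" by linarith
    then show ?thesis by cases simp_all
  qed (simp add: binomial_eq_0)
  finally show ?thesis .
qed

lemma infsum_diagonals:
  fixes F :: "nat \<times> nat \<Rightarrow> 'a::banach"
  assumes "F summable_on UNIV \<times> UNIV"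
  shows "infsum F (UNIV \<times> UNIV) = (\<Sum>\<^sub>\<infinity>n. \<Sum>i\<le>n. F (i, n - i))"
proof -
  have bij: "bij_betw (\<lambda>(n,i). (i, n - i)) (SIGMA n:UNIV. {..n::nat}) (UNIV \<times> UNIV)"
    by (rule bij_betw_byWitness[where f' = "\<lambda>(j,k). (j + k, j)"]) auto
  let ?G = "\<lambda>p. F ((\<lambda>(n,i). (i, n - i)) p)"
  have "infsum F (UNIV \<times> UNIV) = infsum ?G (SIGMA n:UNIV. {..n})"
    by (rule infsum_reindex_bij_betw[OF bij, symmetric])
  also have "\<dots> = (\<Sum>\<^sub>\<infinity>n. \<Sum>\<^sub>\<infinity>i\<in>{..n}. ?G (n, i))"
    using assms summable_on_reindex_bij_betw[OF bij, of F]
    by (intro infsum_Sigma_banach[symmetric]) simp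
  finally show ?thesis by simp
qed

text \<open>For 0 \<le> C \<le> 1 the series of sqrt(1 - t) at t = C converges absolutely to a positive
  square root of 1 - C.\<close>

locale positive_contraction =
  fixes C :: "'a::complex_hilbert \<Rightarrow> 'a"
  assumes bounded_clinear: "bounded_clinear_op C" and selfadjoint: "selfadjoint_op C"
    and positive: "positive_op C" and form_le: "\<And>x. inner (C x) x \<le> inner x x"
begin

lemma norm_le: "norm (C x) \<le> norm x"
  using selfadjoint_op_norm_le[OF bounded_clinear_op_linear[OF bounded_clinear] selfadjoint, of 1]
    form_le positive by (simp add: positive_op_def power2_norm_eq_inner)

lemma bounded_clinear_funpow: "bounded_clinear_op (C ^^ k)"
  by (induction k) (auto simp: bounded_clinear_op_ident bounded_clinear_op_compose bounded_clinear)

lemma bounded_linear_funpow: "bounded_linear (C ^^ k)"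
  using bounded_clinear_funpow by (rule bounded_clinear_op_linear)

lemma norm_funpow_le: "norm ((C ^^ k) x) \<le> norm x"
  by (induction k) (auto intro: order_trans[OF norm_le])

lemma selfadjoint_funpow: "inner ((C ^^ k) x) y = inner x ((C ^^ k) y)"
proof (induction k arbitrary: x y)
  case (Suc k)
  have "inner ((C ^^ Suc k) x) y = inner ((C ^^ k) x) (C y)"
    using selfadjoint by (simp add: selfadjoint_op_def)
  also have "\<dots> = inner x ((C ^^ Suc k) y)" by (simp add: Suc funpow_swap1)
  finally show ?case .
qed simp

definition sqrt_compl :: "'a \<Rightarrow> 'a" where
  "sqrt_compl x = (\<Sum>k. sqrt_coeff k *\<^sub>R (C ^^ k) x)"

lemma norm_series_term_le: "norm (sqrt_coeff k *\<^sub>R (C ^^ k) x) \<le> \<bar>sqrt_coeff k\<bar> * norm x"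
  by (simp add: mult_left_mono norm_funpow_le)

lemma summable_norm_series: "summable (\<lambda>k. norm (sqrt_coeff k *\<^sub>R (C ^^ k) x))"
  by (rule summable_comparison_test[OF _ summable_mult2[OF summable_abs_sqrt_coeff, of "norm x"]])
     (use norm_series_term_le in auto)

lemma summable_series: "summable (\<lambda>k. sqrt_coeff k *\<^sub>R (C ^^ k) x)"
  by (rule summable_norm_cancel[OF summable_norm_series])

lemma bounded_linear_sqrt_compl_apply:
  assumes "bounded_linear h"
  shows "h (sqrt_compl x) = (\<Sum>k. h (sqrt_coeff k *\<^sub>R (C ^^ k) x))"
  unfolding sqrt_compl_def by (rule bounded_linear.suminf[OF assms summable_series])

lemma bounded_linear_sqrt_compl: "bounded_linear sqrt_compl"
proof (rule bounded_linear_intro)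
  show "sqrt_compl (x + y) = sqrt_compl x + sqrt_compl y" for x y
    unfolding sqrt_compl_def
    by (simp add: linear_add[OF bounded_linear.linear[OF bounded_linear_funpow]] scaleR_add_right
        suminf_add[OF summable_series summable_series])
  show "sqrt_compl (r *\<^sub>R x) = r *\<^sub>R sqrt_compl x" for r x
    using bounded_linear_sqrt_compl_apply[OF bounded_linear_scaleR_right, of r x]
    by (simp add: sqrt_compl_def linear_scale[OF bounded_linear.linear[OF bounded_linear_funpow]]
        mult.commute)
  show "norm (sqrt_compl x) \<le> norm x * (\<Sum>k. \<bar>sqrt_coeff k\<bar>)" for x
  proof -
    have "norm (sqrt_compl x) \<le> (\<Sum>k. norm (sqrt_coeff k *\<^sub>R (C ^^ k) x))"
      unfolding sqrt_compl_def by (rule summable_norm[OF summable_norm_series])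
    also have "\<dots> \<le> (\<Sum>k. \<bar>sqrt_coeff k\<bar> * norm x)"
      by (rule suminf_le[OF norm_series_term_le summable_norm_series
            summable_mult2[OF summable_abs_sqrt_coeff]])
    also have "\<dots> = norm x * (\<Sum>k. \<bar>sqrt_coeff k\<bar>)"
      by (simp add: suminf_mult[OF summable_abs_sqrt_coeff] mult.commute)
    finally show ?thesis .
  qed
qed

lemma commute_sqrt_compl:
  assumes Z: "bounded_linear Z" and ZC: "\<And>x. Z (C x) = C (Z x)"
  shows "Z (sqrt_compl x) = sqrt_compl (Z x)"
proof -
  have Zk: "Z ((C ^^ k) y) = (C ^^ k) (Z y)" for k y
    by (induction k) (auto simp: ZC)
  have "Z (sqrt_compl x) = (\<Sum>k. Z (sqrt_coeff k *\<^sub>R (C ^^ k) x))"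
    by (rule bounded_linear_sqrt_compl_apply[OF Z])
  also have "\<dots> = sqrt_compl (Z x)"
    unfolding sqrt_compl_def by (simp add: Zk linear_scale[OF bounded_linear.linear[OF Z]])
  finally show ?thesis .
qed

lemma bounded_clinear_sqrt_compl: "bounded_clinear_op sqrt_compl"
  using bounded_linear_sqrt_compl commute_sqrt_compl[OF bounded_linear_imult]
    bounded_clinear_op_imult[OF bounded_clinear]
  by (simp add: bounded_clinear_op_def)

lemma selfadjoint_sqrt_compl: "selfadjoint_op sqrt_compl"
  unfolding selfadjoint_op_def
proof (intro allI)
  fix x y
  have "inner (sqrt_compl x) y = (\<Sum>k. inner (sqrt_coeff k *\<^sub>R (C ^^ k) x) y)"
    by (rule bounded_linear_sqrt_compl_apply[OF bounded_linear_inner_left])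
  also have "\<dots> = (\<Sum>k. inner x (sqrt_coeff k *\<^sub>R (C ^^ k) y))" by (simp add: selfadjoint_funpow)
  also have "\<dots> = inner x (sqrt_compl y)"
    by (rule bounded_linear_sqrt_compl_apply[OF bounded_linear_inner_right, symmetric])
  finally show "inner (sqrt_compl x) y = inner x (sqrt_compl y)" .
qed

text \<open>Each term with k \<ge> 1 has nonpositive coefficient and form at most inner x x,
  and the partial sums of the coefficients are nonnegative.\<close>

lemma positive_sqrt_compl: "positive_op sqrt_compl"
  unfolding positive_op_def
proof
  fix x
  let ?f = "\<lambda>k. inner (sqrt_coeff k *\<^sub>R (C ^^ k) x) x"
  have term_ge: "sqrt_coeff k * inner x x \<le> ?f k" for k
  proof (cases "k = 0")
    case False
    have "inner ((C ^^ k) x) x \<le> norm ((C ^^ k) x) * norm x" by (rule norm_cauchy_schwarz)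
    also have "\<dots> \<le> inner x x" using norm_funpow_le[of k x]
      by (simp add: power2_norm_eq_inner[symmetric] power2_eq_square mult_right_mono)
    finally show ?thesis using sqrt_coeff_nonpos[of k] False
      by (simp add: mult_left_mono_neg)
  qed simp
  have "0 \<le> (\<Sum>k<Suc n. ?f k)" for n
  proof -
    have "0 \<le> (\<Sum>k\<le>n. sqrt_coeff k) * inner x x" using sum_sqrt_coeff_nonneg by simp
    also have "\<dots> \<le> (\<Sum>k<Suc n. ?f k)"
      using sum_mono[OF term_ge] by (simp add: sum_distrib_right lessThan_Suc_atMost)
    finally show ?thesis .
  qed
  moreover have "(\<lambda>n. \<Sum>k<Suc n. ?f k) \<longlonglongrightarrow> (\<Sum>k. ?f k)"
    using bounded_linear.summable[OF bounded_linear_inner_left summable_series]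
    by (intro LIMSEQ_Suc summable_LIMSEQ)
  ultimately have "0 \<le> (\<Sum>k. ?f k)"
    by (intro LIMSEQ_le_const) auto
  then show "0 \<le> inner (sqrt_compl x) x"
    by (simp add: bounded_linear_sqrt_compl_apply[OF bounded_linear_inner_left])
qed

lemma has_sum_series: "((\<lambda>k. sqrt_coeff k *\<^sub>R (C ^^ k) x) has_sum sqrt_compl x) UNIV"
  unfolding sqrt_compl_def
  by (rule norm_summable_imp_has_sum[OF summable_norm_series summable_sums[OF summable_series]])

lemma summable_on_product_series:
  "(\<lambda>(j,k). (sqrt_coeff j * sqrt_coeff k) *\<^sub>R (C ^^ (j + k)) x) summable_on (UNIV \<times> UNIV)"
proof (rule abs_summable_summable)
  have abs_has_sum: "((\<lambda>k. \<bar>sqrt_coeff k\<bar>) has_sum (\<Sum>k. \<bar>sqrt_coeff k\<bar>)) UNIV"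
    using norm_summable_imp_has_sum[of "\<lambda>k. \<bar>sqrt_coeff k\<bar>"] summable_abs_sqrt_coeff
    by (simp add: summable_sums)
  have "(\<lambda>(j,k). \<bar>sqrt_coeff j\<bar> * (\<bar>sqrt_coeff k\<bar> * norm x)) summable_on (UNIV \<times> UNIV)"
  proof (rule summable_on_SigmaI[where g = "\<lambda>j. \<bar>sqrt_coeff j\<bar> * ((\<Sum>k. \<bar>sqrt_coeff k\<bar>) * norm x)"])
    fix j :: nat
    show "((\<lambda>k. case (j, k) of (j, k) \<Rightarrow> \<bar>sqrt_coeff j\<bar> * (\<bar>sqrt_coeff k\<bar> * norm x))
        has_sum \<bar>sqrt_coeff j\<bar> * ((\<Sum>k. \<bar>sqrt_coeff k\<bar>) * norm x)) UNIV"
      by (simp add: has_sum_cmult_right has_sum_cmult_left abs_has_sum)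
  next
    show "(\<lambda>j. \<bar>sqrt_coeff j\<bar> * ((\<Sum>k. \<bar>sqrt_coeff k\<bar>) * norm x)) summable_on UNIV"
      using has_sum_cmult_left[OF abs_has_sum] by (auto simp: summable_on_def)
  qed auto
  then have "(\<lambda>p. norm ((\<lambda>(j,k). \<bar>sqrt_coeff j\<bar> * (\<bar>sqrt_coeff k\<bar> * norm x)) p))
      summable_on (UNIV \<times> UNIV)"
    by (simp add: case_prod_unfold abs_mult)
  then show "(\<lambda>p. norm ((\<lambda>(j,k). (sqrt_coeff j * sqrt_coeff k) *\<^sub>R (C ^^ (j + k)) x) p))
      summable_on (UNIV \<times> UNIV)"
    by (rule Infinite_Sum.abs_summable_on_comparison_test)
       (auto simp: abs_mult mult.assoc intro!: mult_left_mono norm_funpow_le)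
qed

lemma sqrt_compl_sqrt_compl: "sqrt_compl (sqrt_compl x) = x - C x"
proof -
  define F where "F = (\<lambda>(j,k). (sqrt_coeff j * sqrt_coeff k) *\<^sub>R (C ^^ (j + k)) x)"
  have row: "((\<lambda>k. F (j, k)) has_sum sqrt_coeff j *\<^sub>R (C ^^ j) (sqrt_compl x)) UNIV" for j
    using has_sum_bounded_linear[OF bounded_linear_compose[OF bounded_linear_scaleR_right
        bounded_linear_funpow] has_sum_series, of "sqrt_coeff j" j x]
    by (simp add: F_def linear_scale[OF bounded_linear.linear[OF bounded_linear_funpow]] funpow_add)
  have "sqrt_compl (sqrt_compl x) = (\<Sum>\<^sub>\<infinity>j. sqrt_coeff j *\<^sub>R (C ^^ j) (sqrt_compl x))"
    by (rule infsumI[OF has_sum_series, symmetric])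
  also have "\<dots> = (\<Sum>\<^sub>\<infinity>j. \<Sum>\<^sub>\<infinity>k. F (j, k))"
    by (rule infsum_cong) (rule infsumI[OF row, symmetric])
  also have "\<dots> = infsum F (UNIV \<times> UNIV)"
    using summable_on_product_series by (intro infsum_Sigma_banach) (simp add: F_def)
  also have "\<dots> = (\<Sum>\<^sub>\<infinity>n. \<Sum>i\<le>n. F (i, n - i))"
    by (rule infsum_diagonals) (use summable_on_product_series in \<open>simp add: F_def\<close>)
  also have "\<dots> = (\<Sum>\<^sub>\<infinity>n. (\<Sum>i\<le>n. sqrt_coeff i * sqrt_coeff (n - i)) *\<^sub>R (C ^^ n) x)"
    by (simp add: F_def scaleR_sum_left)
  also have "\<dots> = (\<Sum>\<^sub>\<infinity>n\<in>{0,1}. (if n = 0 then 1 else -1) *\<^sub>R (C ^^ n) x)"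
    by (subst sqrt_coeff_convolution, rule infsum_cong_neutral) auto
  also have "\<dots> = x - C x" by simp
  finally show ?thesis .
qed

end

section \<open>Positive square roots and the modulus\<close>

lemma positive_contraction_id_minus:
  fixes B :: "'a::complex_hilbert \<Rightarrow> 'a"
  assumes B: "bounded_clinear_op B" "selfadjoint_op B" "positive_op B"
    and \<beta>: "onorm B \<le> \<beta>" "0 < \<beta>"
  shows "positive_contraction (\<lambda>x. x - (1 / \<beta>) *\<^sub>R B x)"
proof
  have Bl: "bounded_linear B" using B(1) by (rule bounded_clinear_op_linear)
  show "bounded_clinear_op (\<lambda>x. x - (1 / \<beta>) *\<^sub>R B x)"
    using B(1) by (auto simp: bounded_clinear_op_def linear_diff[OF linear_imult] imult_scaleR
        intro!: bounded_linear_sub bounded_linear_ident bounded_linear_scaleR_right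
        bounded_linear_compose[OF bounded_linear_scaleR_right Bl])
  show "selfadjoint_op (\<lambda>x. x - (1 / \<beta>) *\<^sub>R B x)"
    using B(2) by (simp add: selfadjoint_op_def inner_diff_left inner_diff_right)
  have "inner (B x) x / \<beta> \<le> inner x x" for x
  proof -
    have "inner (B x) x \<le> norm (B x) * norm x" by (rule norm_cauchy_schwarz)
    also have "\<dots> \<le> \<beta> * norm x * norm x"
      using onorm[OF Bl, of x] mult_right_mono[OF \<beta>(1) norm_ge_zero[of x]]
      by (intro mult_right_mono) auto
    finally show ?thesis
      using \<beta>(2) by (simp add: divide_le_eq power2_norm_eq_inner[symmetric] power2_eq_square mult_ac)
  qed
  then show "positive_op (\<lambda>x. x - (1 / \<beta>) *\<^sub>R B x)"
    by (simp add: positive_op_def inner_diff_left)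
  show "inner (x - (1 / \<beta>) *\<^sub>R B x) x \<le> inner x x" for x
    using B(3) \<beta>(2) by (simp add: inner_diff_left positive_op_def)
qed

lemma positive_sqrt_exists:
  fixes B :: "'a::complex_hilbert \<Rightarrow> 'a"
  assumes B: "bounded_clinear_op B" "selfadjoint_op B" "positive_op B"
  obtains A where "bounded_clinear_op A" "selfadjoint_op A" "positive_op A" "\<And>x. A (A x) = B x"
    and "\<And>Z x. bounded_linear Z \<Longrightarrow> (\<And>y. Z (B y) = B (Z y)) \<Longrightarrow> Z (A x) = A (Z x)"
proof -
  define \<beta> where "\<beta> = onorm B + 1"
  have \<beta>: "onorm B \<le> \<beta>" "0 < \<beta>"
    using onorm_pos_le[OF bounded_clinear_op_linear[OF B(1)]] by (auto simp: \<beta>_def)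
  interpret C: positive_contraction "\<lambda>x. x - (1 / \<beta>) *\<^sub>R B x"
    by (rule positive_contraction_id_minus[OF B \<beta>])
  let ?A = "\<lambda>x. sqrt \<beta> *\<^sub>R C.sqrt_compl x"
  have "C.sqrt_compl (C.sqrt_compl x) = (1 / \<beta>) *\<^sub>R B x" for x
    by (simp add: C.sqrt_compl_sqrt_compl)
  then have "?A (?A x) = B x" for x
    using \<beta>(2) by (simp add: linear_scale[OF bounded_linear.linear[OF C.bounded_linear_sqrt_compl]])
  moreover have "Z (?A x) = ?A (Z x)"
    if Z: "bounded_linear Z" and ZB: "\<And>y. Z (B y) = B (Z y)" for Z x
    using C.commute_sqrt_compl[OF Z] ZB
    by (simp add: linear_diff[OF bounded_linear.linear[OF Z]] linear_scale[OF bounded_linear.linear[OF Z]])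
  moreover have "bounded_clinear_op ?A"
    using C.bounded_clinear_sqrt_compl
    by (auto simp: bounded_clinear_op_def imult_scaleR
        intro: bounded_linear_compose[OF bounded_linear_scaleR_right])
  moreover have "selfadjoint_op ?A"
    using C.selfadjoint_sqrt_compl by (simp add: selfadjoint_op_def)
  moreover have "positive_op ?A"
    using C.positive_sqrt_compl \<beta>(2) by (auto simp: positive_op_def)
  ultimately show ?thesis using that by blast
qed

text \<open>If A and S are commuting positive square roots of the same operator, then for y = A x - S x
  we get (A + S) y = 0, so both forms vanish at y, whence A y = S y = 0 and inner y y = 0.\<close>

lemma positive_sqrt_unique:
  assumes A: "bounded_linear A" "selfadjoint_op A" "positive_op A"
    and S: "bounded_linear S" "selfadjoint_op S" "positive_op S"
    and sq: "\<And>x. A (A x) = S (S x)" and comm: "\<And>x. A (S x) = S (A x)"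
  shows "A = S"
proof
  fix x
  interpret Al: bounded_linear A by fact
  interpret Sl: bounded_linear S by fact
  define y where "y = A x - S x"
  have "A y + S y = 0"
    by (simp add: y_def Al.diff Sl.diff sq comm)
  then have "inner (A y) y + inner (S y) y = 0" by (simp add: inner_add_left[symmetric])
  moreover have "0 \<le> inner (A y) y" "0 \<le> inner (S y) y" using A(3) S(3) by (auto simp: positive_op_def)
  ultimately have "A y = 0" "S y = 0"
    using positive_op_form_eq_0[OF A] positive_op_form_eq_0[OF S] by auto
  moreover have "inner y y = inner x (A y) - inner x (S y)"
    using A(2) S(2) unfolding selfadjoint_op_def y_def by (simp add: inner_diff_left)
  ultimately show "A x = S x" by (simp add: y_def)
qed

lemma real_nonneg_cinner_iff:
  fixes A :: "'a::complex_hilbert \<Rightarrow> 'a"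
  assumes "bounded_clinear_op A"
  shows "(\<forall>x. Im (cinner (A x) x) = 0 \<and> 0 \<le> Re (cinner (A x) x))
    \<longleftrightarrow> selfadjoint_op A \<and> positive_op A"
proof -
  have "inner (imult (A x)) x = 0" if "selfadjoint_op A" for x
  proof -
    have "inner (imult (A x)) x = inner (imult x) (A x)"
      using that by (simp add: bounded_clinear_op_imult[OF assms, symmetric] selfadjoint_op_def)
    also have "\<dots> = - inner x (imult (A x))" by (rule inner_imult_left)
    also have "\<dots> = - inner (imult (A x)) x" by (simp add: inner_commute)
    finally show ?thesis by simp
  qed
  then show ?thesis
    using selfadjoint_op_if_imult_form_0[OF assms]
    by (auto simp: cinner_def positive_op_def)
qed

lemma positive_cadj_comp:
  assumes T: "bounded_clinear_op T"
  shows "bounded_clinear_op (\<lambda>x. cadj T (T x))" "selfadjoint_op (\<lambda>x. cadj T (T x))"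
    "positive_op (\<lambda>x. cadj T (T x))"
proof -
  have "inner (cadj T (T x)) y = inner (T x) (T y)" for x y
    by (rule inner_cadj_left[OF T])
  then show "bounded_clinear_op (\<lambda>x. cadj T (T x))" "selfadjoint_op (\<lambda>x. cadj T (T x))"
    "positive_op (\<lambda>x. cadj T (T x))"
    using bounded_clinear_op_compose[OF bounded_clinear_op_cadj[OF T] T]
    by (simp_all add: selfadjoint_op_def positive_op_def inner_commute)
qed

lemma op_abs:
  fixes T :: "'a::complex_hilbert \<Rightarrow> 'a"
  assumes T: "bounded_clinear_op T"
  shows "bounded_clinear_op (op_abs T)" "selfadjoint_op (op_abs T)" "positive_op (op_abs T)"
    "\<And>x. op_abs T (op_abs T x) = cadj T (T x)"
proof -
  obtain S where S: "bounded_clinear_op S" "selfadjoint_op S" "positive_op S"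
      "\<And>x. S (S x) = cadj T (T x)"
    and comm: "\<And>Z x. bounded_linear Z \<Longrightarrow> (\<And>y. Z (cadj T (T y)) = cadj T (T (Z y))) \<Longrightarrow>
      Z (S x) = S (Z x)"
    using positive_sqrt_exists[OF positive_cadj_comp[OF T]] by blast
  have unique: "A = S" if A: "bounded_clinear_op A" "selfadjoint_op A" "positive_op A"
    "\<And>x. A (A x) = cadj T (T x)" for A
  proof (rule positive_sqrt_unique)
    have "A (cadj T (T y)) = cadj T (T (A y))" for y
      using A(4)[of "A y"] by (simp add: A(4)[symmetric])
    then show "A (S x) = S (A x)" for x
      by (rule comm[OF bounded_clinear_op_linear[OF A(1)]])
  qed (use A S in \<open>simp_all add: bounded_clinear_op_linear\<close>)
  have char: "(\<forall>x. Im (cinner (A x) x) = 0 \<and> 0 \<le> Re (cinner (A x) x)) \<longleftrightarrow>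
      selfadjoint_op A \<and> positive_op A" if "bounded_clinear_op A" for A
    using real_nonneg_cinner_iff[OF that] .
  have "op_abs T = S"
    unfolding op_abs_def
  proof (rule the_equality)
    show "bounded_clinear_op S \<and> (\<forall>x. Im (cinner (S x) x) = 0 \<and> 0 \<le> Re (cinner (S x) x))
        \<and> (\<forall>x. S (S x) = cadj T (T x))"
      using S char[OF S(1)] by blast
  qed (use unique char in blast)
  with S show "bounded_clinear_op (op_abs T)" "selfadjoint_op (op_abs T)" "positive_op (op_abs T)"
    "\<And>x. op_abs T (op_abs T x) = cadj T (T x)"
    by simp_all
qed

section \<open>Orthogonal projections, partial isometries and the index\<close>

definition orth_proj_op :: "('a::real_inner \<Rightarrow> 'a) \<Rightarrow> bool" where
  "orth_proj_op P \<longleftrightarrow> bounded_linear P \<and> selfadjoint_op P \<and> (\<forall>x. P (P x) = P x)"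

lemma orth_proj_opD:
  assumes "orth_proj_op P"
  shows "bounded_linear P" "inner (P x) y = inner x (P y)" "P (P x) = P x"
  using assms by (auto simp: orth_proj_op_def selfadjoint_op_def)

lemma orth_proj_op_orthogonal:
  assumes "orth_proj_op P" shows "inner (P x) (y - P y) = 0"
  using orth_proj_opD[OF assms]
  by (simp add: inner_diff_right linear_diff[OF bounded_linear.linear])

lemma orth_proj_op_inner_self:
  assumes "orth_proj_op P" shows "inner (P x) x = norm (P x) ^ 2"
  using orth_proj_op_orthogonal[OF assms, of x x] by (simp add: power2_norm_eq_inner inner_diff_right)

lemma orth_proj_op_norm_le:
  assumes "orth_proj_op P" shows "norm (P x) \<le> norm x"
proof -
  have "norm (P x + (x - P x)) ^ 2 = norm (P x) ^ 2 + norm (x - P x) ^ 2"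
    using orth_proj_op_orthogonal[OF assms]
    by (intro norm_add_Pythagorean) (simp add: orthogonal_def)
  then have "norm (P x) ^ 2 \<le> norm x ^ 2" by simp
  then show ?thesis by (rule power2_le_imp_le) simp
qed

lemma orth_proj_op_range: "orth_proj_op P \<Longrightarrow> range P = {x. P x = x}"
  by (auto simp: orth_proj_op_def image_iff) metis

lemma orth_proj_op_ker_complement:
  assumes "orth_proj_op P" shows "P (x - P x) = 0"
  using orth_proj_opD[OF assms] by (simp add: linear_diff[OF bounded_linear.linear])

lemma cadj_compose:
  assumes "bounded_clinear_op S" "bounded_clinear_op T"
  shows "cadj (\<lambda>x. S (T x)) = (\<lambda>x. cadj T (cadj S x))"
proof (rule cadj_unique[OF bounded_clinear_op_compose[OF assms]])
  show "inner (S (T x)) y = inner x (cadj T (cadj S y))" for x y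
    by (simp only: inner_cadj[OF assms(1)] inner_cadj[OF assms(2)])
qed

lemma cadj_cadj:
  assumes "bounded_clinear_op X" shows "cadj (cadj X) = X"
  by (rule cadj_unique[OF bounded_clinear_op_cadj[OF assms]]) (rule inner_cadj_left[OF assms])

lemma cadj_comp_self_eq_0:
  assumes "bounded_clinear_op X" and "cadj X (X x) = 0" shows "X x = 0"
  using inner_cadj[OF assms(1), of x "X x"] assms(2) by simp

lemma partial_isometryD:
  assumes "X \<in> partial_isometries"
  shows "bounded_clinear_op X" "X (cadj X (X x)) = X x"
  using assms by (auto simp: partial_isometries_def)

lemma orth_proj_op_initial_projection:
  assumes X: "X \<in> partial_isometries" shows "orth_proj_op (\<lambda>x. cadj X (X x))"
  using partial_isometryD[OF X] positive_cadj_comp[OF partial_isometryD(1)[OF X]]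
  by (simp add: orth_proj_op_def bounded_clinear_op_linear)

lemma norm_partial_isometry:
  assumes X: "X \<in> partial_isometries" shows "norm (X x) = norm (cadj X (X x))"
proof -
  have "norm (X x) ^ 2 = inner (cadj X (X x)) x"
    using inner_cadj_left[OF partial_isometryD(1)[OF X], of "X x" x]
    by (simp add: power2_norm_eq_inner)
  also have "\<dots> = norm (cadj X (X x)) ^ 2"
    by (rule orth_proj_op_inner_self[OF orth_proj_op_initial_projection[OF X]])
  finally show ?thesis by simp
qed

lemma norm_partial_isometry_le:
  assumes "X \<in> partial_isometries" shows "norm (X x) \<le> norm x"
  using norm_partial_isometry[OF assms] orth_proj_op_norm_le[OF orth_proj_op_initial_projection[OF assms]]
  by simp

lemma norm_partial_isometry_initial:
  assumes "X \<in> partial_isometries" and "cadj X (X q) = q" shows "norm (X q) = norm q"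
  using norm_partial_isometry[OF assms(1), of q] assms(2) by simp

lemma partial_isometry_cadj:
  assumes X: "X \<in> partial_isometries" shows "cadj X \<in> partial_isometries"
proof -
  note bcl = partial_isometryD(1)[OF X]
  have "cadj X = cadj (\<lambda>x. X (cadj X (X x)))"
    using partial_isometryD(2)[OF X] by simp
  also have "\<dots> = (\<lambda>x. cadj (\<lambda>y. cadj X (X y)) (cadj X x))"
    by (rule cadj_compose[OF bcl bounded_clinear_op_compose[OF bounded_clinear_op_cadj[OF bcl] bcl]])
  also have "cadj (\<lambda>y. cadj X (X y)) = (\<lambda>y. cadj X (cadj (cadj X) y))"
    by (rule cadj_compose[OF bounded_clinear_op_cadj[OF bcl] bcl])
  finally have "cadj X (X (cadj X x)) = cadj X x" for x
    unfolding cadj_cadj[OF bcl] by (rule fun_cong[symmetric])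
  then show ?thesis
    by (simp add: partial_isometries_def bounded_clinear_op_cadj[OF bcl] cadj_cadj[OF bcl])
qed

lemma cspan_empty: "cspan ({}::'a::complex_hilbert set) = {0}"
  unfolding cspan_def by simp

lemma cdim_zero_space: "cdim {0::'a::complex_hilbert} = 0"
proof -
  have ex: "\<exists>B. finite B \<and> card B = 0 \<and> B \<subseteq> {0::'a} \<and> cspan B = {0}"
    by (rule exI[of _ "{}"]) (simp only: cspan_empty finite.emptyI card.empty empty_subsetI simp_thms)
  have "\<exists>B. finite B \<and> B \<subseteq> {0::'a} \<and> cspan B = {0}"
    by (rule exI[of _ "{}"]) (simp only: cspan_empty finite.emptyI empty_subsetI simp_thms)
  then have "cdim {0::'a} = enat (LEAST n. \<exists>B. finite B \<and> card B = n \<and> B \<subseteq> {0::'a} \<and> cspan B = {0})"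
    unfolding cdim_def by (rule if_P)
  also have "(LEAST n. \<exists>B. finite B \<and> card B = n \<and> B \<subseteq> {0::'a} \<and> cspan B = {0}) = 0"
    using ex by (rule Least_eq_0)
  finally show ?thesis by (simp only: zero_enat_def)
qed

lemma cdim_eq_0_imp:
  assumes "cdim (S::'a::complex_hilbert set) = 0" shows "S = {0}"
proof -
  let ?spans = "\<lambda>n. \<exists>B. finite B \<and> card B = n \<and> B \<subseteq> S \<and> cspan B = S"
  have fin: "\<exists>B. finite B \<and> B \<subseteq> S \<and> cspan B = S"
  proof (rule ccontr)
    assume "\<not> ?thesis"
    then have "cdim S = \<infinity>" unfolding cdim_def by (rule if_not_P)
    with assms show False by simp
  qed
  then have "cdim S = enat (LEAST n. ?spans n)"
    unfolding cdim_def by (rule if_P)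
  with assms have least: "(LEAST n. ?spans n) = 0"
    by (simp add: zero_enat_def)
  from fin have "\<exists>n. ?spans n" by blast
  then have "?spans (LEAST n. ?spans n)" by (rule LeastI_ex)
  then obtain B where "finite B" "card B = 0" "cspan B = S"
    unfolding least by (elim exE conjE)
  then show ?thesis by (simp add: cspan_empty)
qed

lemma range_inter_ker_orth_proj_op:
  assumes "orth_proj_op P" "orth_proj_op Q" "\<And>x. P x = x \<Longrightarrow> Q x = 0 \<Longrightarrow> x = 0"
  shows "range P \<inter> ker_op Q = {0}"
  using assms linear_0[OF bounded_linear.linear[OF orth_proj_opD(1)[OF assms(1)]]]
    linear_0[OF bounded_linear.linear[OF orth_proj_opD(1)[OF assms(2)]]]
  by (auto simp: orth_proj_op_range ker_op_def)

lemma jidx_self_le_0: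
  assumes "orth_proj_op P" shows "jidx P P \<le> 0"
proof -
  have "range P \<inter> ker_op P = {0}"
    by (rule range_inter_ker_orth_proj_op[OF assms assms]) simp
  then show ?thesis
    by (simp add: jidx_def Int_commute cdim_zero_space zero_enat_def[symmetric])
qed

text \<open>With b = 0 the index is the dimension a \<ge> 0 itself, so j \<le> 0 forces a = 0.\<close>

lemma jidx_le_0_imp:
  assumes P: "orth_proj_op P" and Q: "orth_proj_op Q" and j: "jidx P Q \<le> 0"
    and ker_range: "\<And>q. P q = 0 \<Longrightarrow> Q q = q \<Longrightarrow> q = 0"
  shows "range P \<inter> ker_op Q = {0}"
proof -
  have "range Q \<inter> ker_op P = {0}"
    by (rule range_inter_ker_orth_proj_op[OF Q P]) (rule ker_range)
  then have b: "cdim (ker_op P \<inter> range Q) = 0"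
    by (simp only: Int_commute[of "ker_op P"] cdim_zero_space)
  define a where "a = cdim (range P \<inter> ker_op Q)"
  have "jidx P Q = ereal_of_enat a"
    unfolding jidx_def Let_def a_def[symmetric] b by (simp add: zero_enat_def[symmetric])
  with j have "a = 0"
    by (cases a) (auto simp: zero_enat_def)
  then show ?thesis unfolding a_def by (rule cdim_eq_0_imp)
qed

section \<open>Almost minimising vectors of a positive form\<close>

lemma form_lower_bound_on_range:
  fixes A P :: "'a::real_inner \<Rightarrow> 'a"
  assumes A: "bounded_linear A" "selfadjoint_op A" "positive_op A" and P: "orth_proj_op P"
    and AP: "\<And>x. A (P x) = A x"
    and c: "\<And>u. P u = u \<Longrightarrow> norm u = 1 \<Longrightarrow> c \<le> inner (A u) u"
  shows "c * norm (P x) ^ 2 \<le> inner (A x) x"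
proof (cases "P x = 0")
  case True
  then show ?thesis using A(3) by (simp add: positive_op_def)
next
  case False
  interpret Al: bounded_linear A by fact
  interpret Pl: bounded_linear P by (rule orth_proj_opD(1)[OF P])
  have form_P: "inner (A x) x = inner (A (P x)) (P x)"
    using A(2) AP[of x] orth_proj_opD(3)[OF P] by (metis selfadjoint_op_def inner_commute)
  have "c \<le> inner (A (P x /\<^sub>R norm (P x))) (P x /\<^sub>R norm (P x))"
    using False by (intro c) (simp_all add: Pl.scale orth_proj_opD(3)[OF P])
  then show ?thesis using False by (simp add: form_P Al.scale power2_eq_square field_simps)
qed

text \<open>If c P is below A, then A - c P is positive, and the Cauchy-Schwarz inequality for its
  form turns an almost minimising unit vector u into one with A u almost equal to c u.\<close>

lemma near_eigenvector_of_near_minimum: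
  fixes A P :: "'a::real_inner \<Rightarrow> 'a"
  assumes A: "bounded_linear A" "selfadjoint_op A" and P: "orth_proj_op P"
    and lower: "\<And>x. c * norm (P x) ^ 2 \<le> inner (A x) x" and e: "0 < e"
  obtains \<delta> where "0 < \<delta>"
    and "\<And>u. P u = u \<Longrightarrow> inner (A u) u - c * norm u ^ 2 < \<delta> \<Longrightarrow> norm (A u - c *\<^sub>R u) < e"
proof -
  let ?B = "\<lambda>x. A x - c *\<^sub>R P x"
  have B_pos: "positive_op ?B"
    using lower by (simp add: positive_op_def inner_diff_left orth_proj_op_inner_self[OF P])
  have B_lin: "bounded_linear ?B"
    by (intro bounded_linear_sub A(1) bounded_linear_compose[OF bounded_linear_scaleR_right
          orth_proj_opD(1)[OF P]])
  have B_sa: "selfadjoint_op ?B"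
    using A(2) orth_proj_opD(2)[OF P] by (simp add: selfadjoint_op_def inner_diff_left inner_diff_right)
  obtain K where K: "\<And>x. norm (?B x) \<le> norm x * K" "0 \<le> K"
    using bounded_linear.nonneg_bounded[OF B_lin] by blast
  show ?thesis
  proof
    show "0 < e^2 / (K + 1)" using e K(2) by simp
    fix u assume u: "P u = u" "inner (A u) u - c * norm u ^ 2 < e^2 / (K + 1)"
    have "norm (?B u) ^ 2 \<le> K * inner (?B u) u"
      using positive_op_norm_sq_le[OF B_lin B_sa B_pos] K(1) by (simp add: mult.commute)
    also have "\<dots> \<le> K * (e^2 / (K + 1))"
      using u K(2) by (intro mult_left_mono) (simp_all add: inner_diff_left power2_norm_eq_inner)
    also have "\<dots> < e^2"
      using K(2) e by (simp add: field_simps)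
    finally show "norm (A u - c *\<^sub>R u) < e"
      using e u(1) by (simp add: power_less_imp_less_base)
  qed
qed

lemma positive_op_small_value_on_range:
  fixes A P :: "'a::real_inner \<Rightarrow> 'a"
  assumes A: "bounded_linear A" "selfadjoint_op A" "positive_op A" and P: "orth_proj_op P"
    and AP: "\<And>x. A (P x) = A x"
    and w: "P w = w" "w \<noteq> 0" "inner (A w) w < c0 * norm w ^ 2" and e: "0 < e"
  shows "\<exists>v. P v = v \<and> norm v = 1 \<and> norm (A v) < c0 + e"
proof -
  interpret Al: bounded_linear A by fact
  interpret Pl: bounded_linear P by (rule orth_proj_opD(1)[OF P])
  define U where "U = (\<lambda>u. inner (A u) u) ` {u. P u = u \<and> norm u = 1}"
  define c where "c = Inf U"
  have "P (w /\<^sub>R norm w) = w /\<^sub>R norm w" "norm (w /\<^sub>R norm w) = 1"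
    using w by (simp_all add: Pl.scale)
  moreover have "inner (A (w /\<^sub>R norm w)) (w /\<^sub>R norm w) = inner (A w) w / norm w ^ 2"
    using w(2) by (simp add: Al.scale power2_eq_square field_simps)
  then have "inner (A (w /\<^sub>R norm w)) (w /\<^sub>R norm w) < c0"
    using w by (simp add: divide_less_eq)
  ultimately have "U \<noteq> {}" and "\<exists>t\<in>U. t < c0" by (auto simp: U_def)
  have U_bdd: "bdd_below U" using A(3) by (auto simp: U_def positive_op_def intro!: bdd_belowI[of _ 0])
  have "0 \<le> c" unfolding c_def
    using \<open>U \<noteq> {}\<close> A(3) by (auto simp: U_def positive_op_def intro!: cInf_greatest)
  have "c < c0" unfolding c_def using \<open>\<exists>t\<in>U. t < c0\<close> U_bdd by (meson cInf_lower le_less_trans)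
  have "c \<le> inner (A u) u" if "P u = u" "norm u = 1" for u
    unfolding c_def using U_bdd that by (auto simp: U_def intro!: cInf_lower)
  then obtain \<delta> where "0 < \<delta>"
    and near: "\<And>u. P u = u \<Longrightarrow> inner (A u) u - c * norm u ^ 2 < \<delta> \<Longrightarrow> norm (A u - c *\<^sub>R u) < e"
    using near_eigenvector_of_near_minimum[OF A(1,2) P form_lower_bound_on_range[OF A P AP] e]
    by blast
  then obtain u where u: "P u = u" "norm u = 1" "inner (A u) u < c + \<delta>"
    using cInf_less_iff[OF \<open>U \<noteq> {}\<close> U_bdd, of "c + \<delta>"] by (auto simp: c_def U_def)
  then have "norm (A u) < c + e"
    using near[of u] norm_triangle_ineq2[of "A u" "c *\<^sub>R u"] \<open>0 \<le> c\<close> by simp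
  then show ?thesis using u \<open>c < c0\<close> by (intro exI[of _ u]) simp
qed

section \<open>Lower bounds from the index condition\<close>

lemma subspace_closure:
  fixes S :: "'a::real_normed_vector set"
  assumes "subspace S" shows "subspace (closure S)"
  unfolding subspace_def
proof (intro conjI ballI allI)
  show "0 \<in> closure S" using assms closure_subset subspace_0 by blast
next
  fix x y assume "x \<in> closure S" "y \<in> closure S"
  then obtain f g where f: "\<And>n. f n \<in> S" "f \<longlonglongrightarrow> x" and g: "\<And>n. g n \<in> S" "g \<longlonglongrightarrow> y"
    by (meson closure_sequential)
  have "(\<lambda>n. f n + g n) \<longlonglongrightarrow> x + y" by (intro tendsto_intros f g)
  moreover have "\<And>n. f n + g n \<in> S" using f g assms by (simp add: subspace_add)
  ultimately show "x + y \<in> closure S" by (meson closure_sequential)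
next
  fix c :: real and x assume "x \<in> closure S"
  then obtain f where f: "\<And>n. f n \<in> S" "f \<longlonglongrightarrow> x" by (meson closure_sequential)
  have "(\<lambda>n. c *\<^sub>R f n) \<longlonglongrightarrow> c *\<^sub>R x" by (intro tendsto_intros f)
  moreover have "\<And>n. c *\<^sub>R f n \<in> S" using f assms by (simp add: subspace_scale)
  ultimately show "c *\<^sub>R x \<in> closure S" by (meson closure_sequential)
qed

text \<open>The part of v orthogonal to P (ran Q) lies in ran P \<inter> ker Q.\<close>

lemma orth_proj_op_dense_image:
  fixes P Q :: "'a::complex_hilbert \<Rightarrow> 'a"
  assumes P: "orth_proj_op P" and Q: "orth_proj_op Q" and trivial: "range P \<inter> ker_op Q = {0}"
    and v: "P v = v" and e: "0 < e"
  shows "\<exists>q. Q q = q \<and> dist (P q) v < e"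
proof -
  interpret Pl: bounded_linear P by (rule orth_proj_opD(1)[OF P])
  interpret Ql: bounded_linear Q by (rule orth_proj_opD(1)[OF Q])
  define M where "M = P ` {q. Q q = q}"
  have "subspace M" unfolding M_def
    by (rule linear_subspace_image[OF Pl.linear]) (auto simp: subspace_def Ql.add Ql.scale Ql.zero)
  then obtain m where m: "m \<in> closure M" "\<forall>y\<in>closure M. inner (v - m) y = 0"
    using orthogonal_projection_exists[OF subspace_closure closed_closure] by blast
  define z where "z = v - m"
  have "closure M \<subseteq> {x. P x = x}"
    by (intro closure_minimal closed_Collect_eq Pl.continuous_on continuous_on_id)
      (auto simp: M_def orth_proj_opD(3)[OF P])
  then have Pz: "P z = z" using m(1) v by (auto simp: z_def Pl.diff)
  have "inner z q = 0" if "Q q = q" for q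
  proof -
    have "P q \<in> M" using that by (auto simp: M_def)
    then have "P q \<in> closure M" using closure_subset by blast
    then have "inner z (P q) = 0" using m(2) by (simp add: z_def)
    then show ?thesis using orth_proj_opD(2)[OF P, of z q] Pz by simp
  qed
  then have "inner z (Q z) = 0"
    using orth_proj_opD(3)[OF Q, of z] by blast
  then have "inner (Q z) z = 0" by (simp only: inner_commute)
  then have "norm (Q z) ^ 2 = 0"
    by (simp add: orth_proj_op_inner_self[OF Q])
  then have "z \<in> range P \<inter> ker_op Q"
    using Pz by (auto simp: ker_op_def orth_proj_op_range[OF P])
  then have "v \<in> closure M" using m(1) trivial by (simp add: z_def)
  then show ?thesis using e by (auto simp: M_def closure_approachable)
qed

text \<open>Here ker P meets ran X*X trivially, since S vanishes on the former while X is isometric on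
  the latter and s < 1; the index condition transfers this to ran P and ker X*X.\<close>

lemma jidx_le_0_near_partial_isometry:
  fixes S P X :: "'a::complex_hilbert \<Rightarrow> 'a"
  assumes P: "orth_proj_op P" and X: "X \<in> partial_isometries"
    and j: "jidx P (\<lambda>x. cadj X (X x)) \<le> 0"
    and S_ker: "\<And>k. P k = 0 \<Longrightarrow> S k = 0"
    and S_near: "\<And>x. norm (S x - X x) \<le> s * norm x" and s: "s < 1"
  shows "range P \<inter> ker_op (\<lambda>x. cadj X (X x)) = {0}"
proof (rule jidx_le_0_imp[OF P orth_proj_op_initial_projection[OF X] j])
  fix q assume "P q = 0" "cadj X (X q) = q"
  then have "norm q \<le> s * norm q"
    using S_near[of q] S_ker norm_partial_isometry_initial[OF X] by simp
  then show "q = 0" using s by (simp add: mult_le_cancel_right1)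
qed

text \<open>Approximate v \<in> ran P by P q with q \<in> ran X*X; then w = v + (q - P q) has S w = S v,
  norm at least 1, and lies close to q, on which X is isometric.\<close>

lemma norm_ge_of_near_partial_isometry:
  fixes S P X :: "'a::complex_hilbert \<Rightarrow> 'a"
  assumes P: "orth_proj_op P" and X: "X \<in> partial_isometries"
    and j: "jidx P (\<lambda>x. cadj X (X x)) \<le> 0"
    and S: "bounded_linear S" and S_ker: "\<And>k. P k = 0 \<Longrightarrow> S k = 0"
    and S_near: "\<And>x. norm (S x - X x) \<le> s * norm x"
    and v: "P v = v" "norm v = 1"
  shows "1 - s \<le> norm (S v)"
proof (rule ccontr)
  assume "\<not> ?thesis"
  then have small: "norm (S v) + s < 1" by simp
  then have s1: "s < 1" using norm_ge_zero[of "S v"] by linarith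
  interpret Sl: bounded_linear S by fact
  interpret Xl: bounded_linear X by (rule bounded_clinear_op_linear[OF partial_isometryD(1)[OF X]])
  define \<eta> where "\<eta> = (1 - s - norm (S v)) / 4"
  have \<eta>: "0 < \<eta>" using small by (simp add: \<eta>_def)
  obtain q where q: "cadj X (X q) = q" "dist (P q) v < \<eta>"
    using orth_proj_op_dense_image[OF P orth_proj_op_initial_projection[OF X]
        jidx_le_0_near_partial_isometry[OF P X j S_ker S_near s1] v(1) \<eta>]
    by blast
  define w where "w = v + (q - P q)"
  have Sw: "S w = S v"
    using S_ker[OF orth_proj_op_ker_complement[OF P]] by (simp add: w_def Sl.add)
  have "norm w ^ 2 = norm v ^ 2 + norm (q - P q) ^ 2"
    using orth_proj_op_orthogonal[OF P, of v q] v(1)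
    unfolding w_def by (intro norm_add_Pythagorean) (simp add: orthogonal_def)
  then have w1: "1 \<le> norm w" using v(2) by (simp add: power2_le_imp_le)
  have wq: "norm (w - q) < \<eta>" using q(2) by (simp add: w_def dist_norm norm_minus_commute)
  have "norm w - 2 * \<eta> \<le> norm (X w)"
    using norm_triangle_ineq[of q "w - q"] norm_triangle_ineq4[of "X w" "X (w - q)"]
      norm_partial_isometry_le[OF X, of "w - q"] norm_partial_isometry_initial[OF X q(1)] wq
    by (simp add: Xl.diff)
  also have "\<dots> \<le> norm (S v) + s * norm w"
    using norm_triangle_ineq4[of "S w" "S w - X w"] S_near[of w] Sw by simp
  finally have "(1 - s) * norm w \<le> norm (S v) + 2 * \<eta>" by (simp add: algebra_simps)
  moreover have "1 - s \<le> (1 - s) * norm w" using w1 s1 by simp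
  ultimately have "1 - s \<le> norm (S v) + 2 * \<eta>" by linarith
  then show False using small by (simp add: \<eta>_def field_simps)
qed

section \<open>Distance from T to partial isometries\<close>

locale polar_decomposition =
  fixes T V :: "'a::complex_hilbert \<Rightarrow> 'a"
  assumes bounded_clinear: "bounded_clinear_op T"
    and partial_isometry: "V \<in> partial_isometries"
    and polar: "\<forall>x. T x = V (op_abs T x)"
    and ker_eq: "ker_op V = ker_op T"
begin

abbreviation "A \<equiv> op_abs T"
abbreviation "P \<equiv> \<lambda>x. cadj V (V x)"

lemma A_linear: "bounded_linear A"
  by (rule bounded_clinear_op_linear[OF op_abs(1)[OF bounded_clinear]])

lemma V_clinear: "bounded_clinear_op V"
  by (rule partial_isometryD(1)[OF partial_isometry])

lemma P: "orth_proj_op P"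
  by (rule orth_proj_op_initial_projection[OF partial_isometry])

lemma P_final: "orth_proj_op (\<lambda>x. V (cadj V x))"
  using orth_proj_op_initial_projection[OF partial_isometry_cadj[OF partial_isometry]]
  by (simp add: cadj_cadj[OF V_clinear])

lemma norm_A: "norm (A x) = norm (T x)"
proof -
  have "inner (A x) (A x) = inner x (A (A x))"
    using op_abs(2)[OF bounded_clinear] by (simp add: selfadjoint_op_def)
  also have "\<dots> = inner (T x) (T x)" by (simp add: op_abs(4)[OF bounded_clinear] inner_cadj[OF bounded_clinear])
  finally show ?thesis by (simp add: norm_eq_sqrt_inner)
qed

lemma vanish_on_ker_P:
  assumes "P k = 0" shows "V k = 0" "T k = 0" "A k = 0"
proof -
  show "V k = 0" by (rule cadj_comp_self_eq_0[OF V_clinear assms])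
  then show "T k = 0" using ker_eq by (auto simp: ker_op_def)
  then show "A k = 0" using norm_A[of k] by simp
qed

lemma A_P: "A (P x) = A x" and V_P: "V (P x) = V x"
  using vanish_on_ker_P[OF orth_proj_op_ker_complement[OF P, of x]] A_linear
    bounded_clinear_op_linear[OF V_clinear]
  by (simp_all add: linear_diff[OF bounded_linear.linear])

lemma P_A: "P (A x) = A x"
proof -
  define d where "d = A x - P (A x)"
  have "A d = 0" unfolding d_def by (rule vanish_on_ker_P(3)[OF orth_proj_op_ker_complement[OF P]])
  then have "inner (A x) d = 0"
    using op_abs(2)[OF bounded_clinear] by (simp add: selfadjoint_op_def)
  moreover have "inner (P (A x)) d = 0" unfolding d_def by (rule orth_proj_op_orthogonal[OF P])
  ultimately have "inner d d = 0" by (simp add: d_def inner_diff_left)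
  then show ?thesis by (simp add: d_def)
qed

lemma T_minus_V: "T x - V x = V (A x - P x)"
  using polar V_P bounded_clinear_op_linear[OF V_clinear]
  by (simp add: linear_diff[OF bounded_linear.linear])

lemma cadj_T: "cadj T = (\<lambda>y. A (cadj V y))"
proof (rule cadj_unique[OF bounded_clinear])
  show "inner (T x) y = inner x (A (cadj V y))" for x y
    using polar op_abs(2)[OF bounded_clinear]
    by (simp add: inner_cadj[OF V_clinear] selfadjoint_op_def)
qed

text \<open>T - V factors through the selfadjoint operator A - P, whose norm is the supremum of its
  form, and that form can be evaluated on ran P.\<close>

lemma large_form_on_initial_space:
  assumes s: "0 \<le> s" "s < onorm (\<lambda>x. T x - V x)"
  shows "\<exists>w. P w = w \<and> w \<noteq> 0 \<and> s * norm w ^ 2 < \<bar>inner (A w) w - norm w ^ 2\<bar>"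
proof -
  define D where "D x = A x - P x" for x
  have D_lin: "bounded_linear D"
    unfolding D_def by (rule bounded_linear_sub[OF A_linear orth_proj_opD(1)[OF P]])
  have D_sa: "selfadjoint_op D"
    using op_abs(2)[OF bounded_clinear] orth_proj_opD(2)[OF P]
    by (simp add: selfadjoint_op_def D_def inner_diff_left inner_diff_right)
  have "\<exists>x. s * norm x < norm (D x)"
  proof (rule ccontr)
    assume "\<not> ?thesis"
    then have "norm (D x) \<le> s * norm x" for x by (simp add: not_less)
    then have "norm (T x - V x) \<le> s * norm x" for x
      using norm_partial_isometry_le[OF partial_isometry, of "D x"] order_trans
      by (metis T_minus_V D_def)
    then have "onorm (\<lambda>x. T x - V x) \<le> s" using s by (intro onorm_bound) auto
    then show False using s by simp
  qed
  then obtain u where u: "s * norm u ^ 2 < \<bar>inner (D u) u\<bar>"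
    using selfadjoint_op_norm_le[OF D_lin D_sa] by (meson not_le)
  define w where "w = P u"
  have Pw: "P w = w" by (simp add: w_def orth_proj_opD(3)[OF P])
  have "inner (D w) w = inner (D u) u"
    using orth_proj_opD(2)[OF P, of "D u" u] P_A orth_proj_opD(3)[OF P]
    by (simp add: w_def D_def A_P inner_diff_left linear_diff[OF bounded_linear.linear[OF orth_proj_opD(1)[OF P]]])
  moreover have "inner (D w) w = inner (A w) w - norm w ^ 2"
    using Pw by (simp add: D_def inner_diff_left power2_norm_eq_inner)
  moreover have "s * norm w ^ 2 \<le> s * norm u ^ 2"
    using s(1) orth_proj_op_norm_le[OF P, of u] by (simp add: w_def mult_left_mono power_mono)
  ultimately show ?thesis using u Pw by (intro exI[of _ w]) auto
qed

lemma stretch_or_shrink: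
  assumes s: "0 \<le> s" "s < onorm (\<lambda>x. T x - V x)"
  shows "(\<exists>w. (1 + s) * norm w < norm (T w)) \<or> (\<exists>v. P v = v \<and> norm v = 1 \<and> norm (T v) + s < 1)"
proof -
  define s' where "s' = (s + onorm (\<lambda>x. T x - V x)) / 2"
  have s': "s < s'" "s' < onorm (\<lambda>x. T x - V x)" "0 \<le> s'" using s by (auto simp: s'_def)
  obtain w where w: "P w = w" "w \<noteq> 0" "s' * norm w ^ 2 < \<bar>inner (A w) w - norm w ^ 2\<bar>"
    using large_form_on_initial_space[OF s'(3,2)] by blast
  show ?thesis
  proof (cases "norm w ^ 2 < inner (A w) w")
    case True
    then have "(1 + s') * norm w * norm w < norm (A w) * norm w"
      using w(3) norm_cauchy_schwarz[of "A w" w] by (simp add: power2_eq_square algebra_simps)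
    then have "(1 + s') * norm w < norm (T w)" using w(2) by (simp add: norm_A)
    moreover have "(1 + s) * norm w \<le> (1 + s') * norm w" using s' by (intro mult_right_mono) auto
    ultimately show ?thesis by (intro disjI1 exI[of _ w]) linarith
  next
    case False
    then have "inner (A w) w < (1 - s') * norm w ^ 2" using w(3) by (simp add: algebra_simps)
    then obtain v where "P v = v" "norm v = 1" "norm (A v) < (1 - s') + (s' - s) / 2"
      using positive_op_small_value_on_range[OF A_linear op_abs(2,3)[OF bounded_clinear] P A_P w(1,2)]
        s'(1) by (metis diff_gt_0_iff_gt half_gt_zero)
    then show ?thesis using s'(1) by (auto simp: norm_A field_simps)
  qed
qed

lemma onorm_le_of_bounded_below:
  assumes X: "X \<in> partial_isometries"
    and below: "\<And>v. P v = v \<Longrightarrow> norm v = 1 \<Longrightarrow> 1 - onorm (\<lambda>x. T x - X x) \<le> norm (T v)"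
  shows "onorm (\<lambda>x. T x - V x) \<le> onorm (\<lambda>x. T x - X x)"
proof (rule ccontr)
  define s where "s = onorm (\<lambda>x. T x - X x)"
  have TX: "bounded_linear (\<lambda>x. T x - X x)"
    by (intro bounded_linear_sub bounded_clinear_op_linear bounded_clinear partial_isometryD(1)[OF X])
  have near: "norm (T x - X x) \<le> s * norm x" for x
    unfolding s_def by (rule onorm[OF TX])
  assume "\<not> ?thesis"
  then have "s < onorm (\<lambda>x. T x - V x)" by (simp add: s_def)
  with onorm_pos_le[OF TX] consider w where "(1 + s) * norm w < norm (T w)"
    | v where "P v = v" "norm v = 1" "norm (T v) + s < 1"
    using stretch_or_shrink[of s] unfolding s_def by blast
  then show False
  proof cases
    case 1
    have "norm (T w) \<le> norm (X w) + norm (T w - X w)" by (rule norm_triangle_sub)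
    then show False
      using 1 near[of w] norm_partial_isometry_le[OF X, of w] by (simp add: algebra_simps)
  next
    case 2
    then show False using below[of v] by (simp add: s_def)
  qed
qed

lemma onorm_le_if_index_initial:
  assumes X: "X \<in> partial_isometries" and j: "jidx P (\<lambda>x. cadj X (X x)) \<le> 0"
  shows "onorm (\<lambda>x. T x - V x) \<le> onorm (\<lambda>x. T x - X x)"
proof (rule onorm_le_of_bounded_below[OF X])
  fix v assume v: "P v = v" "norm v = 1"
  show "1 - onorm (\<lambda>x. T x - X x) \<le> norm (T v)"
    by (rule norm_ge_of_near_partial_isometry[OF P X j bounded_clinear_op_linear[OF bounded_clinear]
          vanish_on_ker_P(2) norm_diff_le_onorm[OF bounded_clinear partial_isometryD(1)[OF X]] v])
qed

text \<open>The second family is the first one for the adjoints: T* = A V* vanishes on ker V V*,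
  X* is a partial isometry within distance s of T*, and V maps ran P isometrically onto
  ran V V* with norm (T* (V v)) = norm (A v) = norm (T v).\<close>

lemma onorm_le_if_index_final:
  assumes X: "X \<in> partial_isometries" and j: "jidx (\<lambda>x. V (cadj V x)) (\<lambda>x. X (cadj X x)) \<le> 0"
  shows "onorm (\<lambda>x. T x - V x) \<le> onorm (\<lambda>x. T x - X x)"
proof (rule onorm_le_of_bounded_below[OF X])
  fix v assume v: "P v = v" "norm v = 1"
  note X_clinear = partial_isometryD(1)[OF X]
  have j': "jidx (\<lambda>x. V (cadj V x)) (\<lambda>x. cadj (cadj X) (cadj X x)) \<le> 0"
    using j by (simp add: cadj_cadj[OF X_clinear])
  have ker: "cadj T k = 0" if "V (cadj V k) = 0" for k
    using cadj_comp_self_eq_0[OF bounded_clinear_op_cadj[OF V_clinear], of k] that A_linear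
    by (simp add: cadj_cadj[OF V_clinear] cadj_T linear_0[OF bounded_linear.linear])
  have near: "norm (cadj T x - cadj X x) \<le> onorm (\<lambda>x. T x - X x) * norm x" for x
    by (rule norm_cadj_diff_le[OF bounded_clinear X_clinear norm_diff_le_onorm[OF bounded_clinear X_clinear]])
  have "norm (V v) = 1" using v norm_partial_isometry[OF partial_isometry, of v] by simp
  then have "1 - onorm (\<lambda>x. T x - X x) \<le> norm (cadj T (V v))"
    by (intro norm_ge_of_near_partial_isometry[OF P_final partial_isometry_cadj[OF X] j'
          bounded_clinear_op_linear[OF bounded_clinear_op_cadj[OF bounded_clinear]] ker near]
        partial_isometryD(2)[OF partial_isometry])
  then show "1 - onorm (\<lambda>x. T x - X x) \<le> norm (T v)"
    using v(1) by (simp add: cadj_T A_P norm_A)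
qed

end

theorem theorem2p3:
  fixes T V :: "'a::complex_hilbert \<Rightarrow> 'a"
  assumes sep: "separable_space (euclidean :: 'a topology)"
    and T: "bounded_clinear_op T"
    and V: "V \<in> partial_isometries"
    and polar: "\<forall>x. T x = V (op_abs T x)"
    and kerV: "ker_op V = ker_op T"
  shows "V \<in> partial_isometries \<and> jidx (cadj V \<circ> V) (cadj V \<circ> V) \<le> 0
       \<and> (\<forall>X \<in> partial_isometries. jidx (cadj V \<circ> V) (cadj X \<circ> X) \<le> 0 \<longrightarrow>
              onorm (\<lambda>x. T x - V x) \<le> onorm (\<lambda>x. T x - X x))
       \<and> jidx (V \<circ> cadj V) (V \<circ> cadj V) \<le> 0
       \<and> (\<forall>X \<in> partial_isometries. jidx (V \<circ> cadj V) (X \<circ> cadj X) \<le> 0 \<longrightarrow>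
              onorm (\<lambda>x. T x - V x) \<le> onorm (\<lambda>x. T x - X x))"
proof -
  interpret polar_decomposition T V using T V polar kerV by unfold_locales
  show ?thesis
    using V jidx_self_le_0[OF P] jidx_self_le_0[OF P_final] onorm_le_if_index_initial
      onorm_le_if_index_final
    by (simp add: comp_def)
qed

end
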